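(* For every (possibly infinite) $\mathcal{A}\subseteq\mathbb{A}$, every (reachable) state $s$ of a $\$$-bounded contract and every finite sequence of transactions $\vec{Y}$: (1) $\mathrm{xG}_{\mathcal{A}}(s,\vec{Y})$ is defined and is a finite integer; (2) if $\mathrm{xG}_{\mathcal{A}}(s,\vec{Y})>0$ then $\vec{Y}\notin\kappa_{\mathcal{A}}(\emptyset)^*$; (3) there exists a finite $\mathcal{A}_0\subseteq\mathcal{A}$ such that for every $\mathcal{B}$ with $\mathcal{A}_0\subseteq\mathcal{B}\subseteq\mathcal{A}$, $\mathrm{xG}_{\mathcal{A}_0}(s,\vec{Y})=\mathrm{xG}_{\mathcal{B}}(s,\vec{Y})$.
   Context: Fix a countably infinite set $\mathbb{A}$ of actors, a set $\mathbb{T}$ of token types and a set $\mathbb{X}$ of transactions. A wallet is a function $\mathbb{T}\to\mathbb{N}$; $\mathbb{W}_{\mathrm{fin}}$ is the set of finite-support wallets. A wallet state is $W:\mathbb{A}\to(\mathbb{T}\to\mathbb{N})$ satisfying the finite tokens axiom $\sum_{\tau}\sum_{a\in\mathbb{A}}W(a)(\tau)\in\mathbb{N}$. A contract consists of blockchain states $\mathbb{S}=\mathbb{C}\times\mathbb{W}$ (contract state, wallet state), a partial transition function $\mapsto:(\mathbb{S}\times\mathbb{X})\rightharpoonup\mathbb{S}$ and initial states $\mathbb{S}_0$. A transaction $x$ is valid in $s$ if $s\xmapsto{x}s'$ for some $s'$. For finite sequences, $s\xrightarrow{\varepsilon}s$, and $s\xrightarrow{\vec{Y}x}s'$ iff either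 $s\xrightarrow{\vec{Y}}s''\xmapsto{x}s'$, or $s\xrightarrow{\vec{Y}}s'$ and $x$ is not valid in $s'$. $s$ is reachable if $s_0\xrightarrow{\vec X}s$ for some $s_0\in\mathbb{S}_0$ and some $\vec X$. $W_{\mathcal{A}}(s)=\sum_{a\in\mathcal{A}}W(s)(a)$. A wealth function is an additive map $\$:\mathbb{W}_{\mathrm{fin}}\to\mathbb{N}$; $\$_{\mathcal{A}}(s)=\$(W_{\mathcal{A}}(s))$; the gain is $G_{\mathcal{A}}(s,\vec{X})=\$_{\mathcal{A}}(s')-\$_{\mathcal{A}}(s)$ where $s\xrightarrow{\vec X}s'$. The contract is $\$$-bounded if for every $s_0\in\mathbb{S}_0$ there is $n$ such that $\$_{\mathbb{A}}(s)<n$ for all $s$ reachable from $s_0$. A transaction deducibility function $\kappa:\mathcal{P}(\mathbb{A})\times\mathcal{P}(\mathbb{X})\to\mathcal{P}(\mathbb{X})$, $(\mathcal{A},\mathcal{X})\mapsto\kappa_{\mathcal{A}}(\mathcal{X})$, satisfies: extensivity $\mathcal{X}\subseteq\kappa_{\mathcal{A}}(\mathcal{X})$; idempotence $\kappa_{\mathcal{A}}(\kappa_{\mathcal{A}}(\mathcal{X}))=\kappa_{\mathcal{A}}(\mathcal{X})$; monotonicity in both arguments; continuity $\kappa_{\mathcal{A}}(\bigcup_i\mathcal{X}_i)=\bigcup_i\kappa_{\mathcal{A}}(\mathcal{X}_i)$ for increasing chains; finite causes (every finite $\mathcal{X}_0$ is contained in $\kappa_{\mathcal{A}_0}(\emptyset)$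 for some finite $\mathcal{A}_0$); private knowledge ($\kappa_{\mathcal{A}}(\emptyset)\subseteq\kappa_{\mathcal{A}'}(\emptyset)$ implies $\mathcal{A}\subseteq\mathcal{A}'$); no shared secrets ($\kappa_{\mathcal{A}}(\mathcal{X})\cap\kappa_{\mathcal{B}}(\mathcal{X})\subseteq\kappa_{\mathcal{A}\cap\mathcal{B}}(\mathcal{X})$). $\mathcal{X}^*$ denotes the finite sequences over $\mathcal{X}$. The unrealized gain is $\mathrm{uG}_{\mathcal{A}}(s)=\max\{G_{\mathcal{A}}(s,\vec{Y}):\vec{Y}\in\kappa_{\mathcal{A}}(\emptyset)^*\}$, and the external gain is $\mathrm{xG}_{\mathcal{A}}(s,\vec{Y})=G_{\mathcal{A}}(s,\vec{Y})-\mathrm{uG}_{\mathcal{A}}(s)$. *)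

theory Defs
  imports "HOL-Library.Countable_Set"
begin

type_synonym ('a,'t) wstate = "'a \<Rightarrow> 't \<Rightarrow> nat"
type_synonym ('c,'a,'t) bstate = "'c \<times> ('a,'t) wstate"

text \<open>Finite tokens axiom: only finitely many (actor, token) pairs hold a nonzero amount,
  i.e. the double sum of all balances is a natural number.\<close>
definition finite_tokens :: "('a,'t) wstate \<Rightarrow> bool" where
  "finite_tokens W \<longleftrightarrow> finite {(a,\<tau>). W a \<tau> \<noteq> 0}"

definition wallet_fin :: "('t \<Rightarrow> nat) \<Rightarrow> bool" where
  "wallet_fin w \<longleftrightarrow> finite {\<tau>. w \<tau> \<noteq> 0}"

definition wealth_fun :: "(('t \<Rightarrow> nat) \<Rightarrow> nat) \<Rightarrow> bool" where
  "wealth_fun f \<longleftrightarrow> (\<forall>w w'. wallet_fin w \<longrightarrow> wallet_fin w' \<longrightarrow>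
      f (\<lambda>\<tau>. w \<tau> + w' \<tau>) = f w + f w')"

definition contract :: "(('c,'a,'t) bstate \<Rightarrow> 'x \<Rightarrow> ('c,'a,'t) bstate option)
    \<Rightarrow> ('c,'a,'t) bstate set \<Rightarrow> bool" where
  "contract step S0 \<longleftrightarrow> (\<forall>s\<in>S0. finite_tokens (snd s)) \<and>
     (\<forall>s x s'. finite_tokens (snd s) \<longrightarrow> step s x = Some s' \<longrightarrow> finite_tokens (snd s'))"

definition run :: "('s \<Rightarrow> 'x \<Rightarrow> 's option) \<Rightarrow> 's \<Rightarrow> 'x list \<Rightarrow> 's" where
  "run step s X = foldl (\<lambda>t x. case step t x of Some t' \<Rightarrow> t' | None \<Rightarrow> t) s X"

definition reachable_from :: "('s \<Rightarrow> 'x \<Rightarrow> 's option) \<Rightarrow> 's \<Rightarrow> 's \<Rightarrow> bool" where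
  "reachable_from step s0 s \<longleftrightarrow> (\<exists>X. run step s0 X = s)"

definition reachable :: "('s \<Rightarrow> 'x \<Rightarrow> 's option) \<Rightarrow> 's set \<Rightarrow> 's \<Rightarrow> bool" where
  "reachable step S0 s \<longleftrightarrow> (\<exists>s0\<in>S0. reachable_from step s0 s)"

text \<open>W_A(s): sum of the wallets of the actors in A (finite by the finite tokens axiom).\<close>
definition walletA :: "'a set \<Rightarrow> ('a,'t) wstate \<Rightarrow> 't \<Rightarrow> nat" where
  "walletA A W \<tau> = (\<Sum>a\<in>{a\<in>A. W a \<tau> \<noteq> 0}. W a \<tau>)"

definition wealthA :: "(('t \<Rightarrow> nat) \<Rightarrow> nat) \<Rightarrow> 'a set \<Rightarrow> ('c,'a,'t) bstate \<Rightarrow> nat" where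
  "wealthA f A s = f (walletA A (snd s))"

definition bounded_contract :: "(('t \<Rightarrow> nat) \<Rightarrow> nat)
    \<Rightarrow> (('c,'a,'t) bstate \<Rightarrow> 'x \<Rightarrow> ('c,'a,'t) bstate option) \<Rightarrow> ('c,'a,'t) bstate set \<Rightarrow> bool" where
  "bounded_contract f step S0 \<longleftrightarrow>
     (\<forall>s0\<in>S0. \<exists>n. \<forall>s. reachable_from step s0 s \<longrightarrow> wealthA f UNIV s < n)"

definition gain :: "(('t \<Rightarrow> nat) \<Rightarrow> nat) \<Rightarrow> (('c,'a,'t) bstate \<Rightarrow> 'x \<Rightarrow> ('c,'a,'t) bstate option)
    \<Rightarrow> 'a set \<Rightarrow> ('c,'a,'t) bstate \<Rightarrow> 'x list \<Rightarrow> int" where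
  "gain f step A s Y = int (wealthA f A (run step s Y)) - int (wealthA f A s)"

definition deducibility :: "('a set \<Rightarrow> 'x set \<Rightarrow> 'x set) \<Rightarrow> bool" where
  "deducibility \<kappa> \<longleftrightarrow>
     (\<forall>A X. X \<subseteq> \<kappa> A X) \<and>
     (\<forall>A X. \<kappa> A (\<kappa> A X) = \<kappa> A X) \<and>
     (\<forall>A A' X X'. A \<subseteq> A' \<longrightarrow> X \<subseteq> X' \<longrightarrow> \<kappa> A X \<subseteq> \<kappa> A' X') \<and>
     (\<forall>A C. Complete_Partial_Order.chain (\<subseteq>) C \<longrightarrow> C \<noteq> {} \<longrightarrow> \<kappa> A (\<Union>C) = (\<Union>X\<in>C. \<kappa> A X)) \<and>
     (\<forall>X0. finite X0 \<longrightarrow> (\<exists>A0. finite A0 \<and> X0 \<subseteq> \<kappa> A0 {})) \<and>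
     (\<forall>A A'. \<kappa> A {} \<subseteq> \<kappa> A' {} \<longrightarrow> A \<subseteq> A') \<and>
     (\<forall>A B X. \<kappa> A X \<inter> \<kappa> B X \<subseteq> \<kappa> (A \<inter> B) X)"

definition gains :: "(('t \<Rightarrow> nat) \<Rightarrow> nat) \<Rightarrow> (('c,'a,'t) bstate \<Rightarrow> 'x \<Rightarrow> ('c,'a,'t) bstate option)
    \<Rightarrow> ('a set \<Rightarrow> 'x set \<Rightarrow> 'x set) \<Rightarrow> 'a set \<Rightarrow> ('c,'a,'t) bstate \<Rightarrow> int set" where
  "gains f step \<kappa> A s = {gain f step A s Y | Y. Y \<in> lists (\<kappa> A {})}"

definition uG :: "(('t \<Rightarrow> nat) \<Rightarrow> nat) \<Rightarrow> (('c,'a,'t) bstate \<Rightarrow> 'x \<Rightarrow> ('c,'a,'t) bstate option)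
    \<Rightarrow> ('a set \<Rightarrow> 'x set \<Rightarrow> 'x set) \<Rightarrow> 'a set \<Rightarrow> ('c,'a,'t) bstate \<Rightarrow> int" where
  "uG f step \<kappa> A s = (GREATEST g. g \<in> gains f step \<kappa> A s)"

definition xG :: "(('t \<Rightarrow> nat) \<Rightarrow> nat) \<Rightarrow> (('c,'a,'t) bstate \<Rightarrow> 'x \<Rightarrow> ('c,'a,'t) bstate option)
    \<Rightarrow> ('a set \<Rightarrow> 'x set \<Rightarrow> 'x set) \<Rightarrow> 'a set \<Rightarrow> ('c,'a,'t) bstate \<Rightarrow> 'x list \<Rightarrow> int" where
  "xG f step \<kappa> A s Y = gain f step A s Y - uG f step \<kappa> A s"

end

theory Submission
  imports Defs
begin

text \<open>Boundedness of the contract bounds every gain from a reachable state, so the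
  set of gains obtainable with the transactions deducible by \<open>\<A>\<close> is a nonempty set of integers
  bounded above and has a maximum \<open>uG\<close>; part (2) is just maximality. For part (3), the
  wealth of \<open>\<A>\<close> in finitely many states only depends on the finitely many actors of \<open>\<A>\<close> holding
  tokens there, and a maximising sequence, being finite, is already deducible by a finite subset of
  \<open>\<A>\<close> (finite causes and no shared secrets). Any \<open>\<B>\<close> between the union of these finite sets
  and \<open>\<A>\<close> then has the same gain on \<open>Y\<close> and the same unrealized gain as \<open>\<A>\<close>.\<close>

lemma run_Nil [simp]: "run step s [] = s"
  by (simp add: run_def)

lemma run_Cons: "run step s (x # X) = run step (case step s x of Some t \<Rightarrow> t | None \<Rightarrow> s) X"
  by (simp add: run_def)

lemma run_append: "run step s (X @ Y) = run step (run step s X) Y"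
  by (simp add: run_def)

lemma contract_step_finite_tokens:
  assumes "contract step S0" and "finite_tokens (snd s)" and "step s x = Some s'"
  shows "finite_tokens (snd s')"
  using assms unfolding contract_def by blast

lemma finite_tokens_run:
  assumes "contract step S0" and "finite_tokens (snd s)"
  shows "finite_tokens (snd (run step s X))"
  using assms(2)
proof (induction X arbitrary: s)
  case Nil
  then show ?case by simp
next
  case (Cons x X)
  have "finite_tokens (snd (case step s x of Some t \<Rightarrow> t | None \<Rightarrow> s))"
  proof (cases "step s x")
    case None
    with Cons.prems show ?thesis by simp
  next
    case (Some t)
    with contract_step_finite_tokens[OF assms(1) Cons.prems Some] show ?thesis by simp
  qed
  then show ?case unfolding run_Cons by (rule Cons.IH)
qed

definition holders :: "('a,'t) wstate \<Rightarrow> 'a set" where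
  "holders W = {a. \<exists>\<tau>. W a \<tau> \<noteq> 0}"

lemma finite_holders:
  assumes "finite_tokens W"
  shows "finite (holders W)"
proof -
  have "holders W = fst ` {(a,\<tau>). W a \<tau> \<noteq> 0}"
    unfolding holders_def by force
  then show ?thesis
    using assms unfolding finite_tokens_def by simp
qed

lemma wallet_fin_walletA:
  assumes "finite_tokens W"
  shows "wallet_fin (walletA A W)"
proof -
  have "\<tau> \<in> snd ` {(a,\<tau>). W a \<tau> \<noteq> 0}" if "walletA A W \<tau> \<noteq> 0" for \<tau>
  proof -
    have "{a\<in>A. W a \<tau> \<noteq> 0} \<noteq> {}"
      using that unfolding walletA_def by force
    then obtain a where "W a \<tau> \<noteq> 0" by blast
    then show ?thesis by (intro image_eqI[of _ snd "(a, \<tau>)"]) simp_all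
  qed
  then have "{\<tau>. walletA A W \<tau> \<noteq> 0} \<subseteq> snd ` {(a,\<tau>). W a \<tau> \<noteq> 0}"
    by blast
  then show ?thesis
    using assms unfolding wallet_fin_def finite_tokens_def by (rule finite_subset[OF _ finite_imageI])
qed

lemma walletA_mono:
  assumes "finite_tokens W" and "A \<subseteq> B"
  shows "walletA A W \<tau> \<le> walletA B W \<tau>"
proof -
  have "finite {a\<in>B. W a \<tau> \<noteq> 0}"
    using finite_holders[OF assms(1)] by (rule finite_subset[rotated]) (auto simp: holders_def)
  then show ?thesis
    unfolding walletA_def by (rule sum_mono2) (use assms(2) in auto)
qed

lemma walletA_eq_if_holders_subset:
  assumes "A \<inter> holders W \<subseteq> B" and "B \<subseteq> A"
  shows "walletA B W = walletA A W"
proof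
  fix \<tau>
  have "{a\<in>B. W a \<tau> \<noteq> 0} = {a\<in>A. W a \<tau> \<noteq> 0}"
    using assms unfolding holders_def by blast
  then show "walletA B W \<tau> = walletA A W \<tau>"
    unfolding walletA_def by simp
qed

lemma wealth_fun_mono:
  assumes "wealth_fun f" and "wallet_fin w" and "wallet_fin w'" and "\<And>\<tau>. w \<tau> \<le> w' \<tau>"
  shows "f w \<le> f w'"
proof -
  define d where "d = (\<lambda>\<tau>. w' \<tau> - w \<tau>)"
  have "wallet_fin d"
    using assms(3) unfolding wallet_fin_def d_def by (rule finite_subset[rotated]) auto
  moreover have "w' = (\<lambda>\<tau>. w \<tau> + d \<tau>)"
    unfolding d_def using assms(4) by (auto intro!: ext)
  ultimately have "f w' = f w + f d"
    using assms(1,2) unfolding wealth_fun_def by metis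
  then show ?thesis by simp
qed

lemma wealthA_mono:
  assumes "wealth_fun f" and "finite_tokens (snd s)" and "A \<subseteq> B"
  shows "wealthA f A s \<le> wealthA f B s"
  unfolding wealthA_def
  using assms(1) wallet_fin_walletA[OF assms(2)] wallet_fin_walletA[OF assms(2)]
    walletA_mono[OF assms(2,3)]
  by (rule wealth_fun_mono)

lemma gain_eq_if_holders_subset:
  assumes "A \<inter> holders (snd s) \<subseteq> B" and "A \<inter> holders (snd (run step s Z)) \<subseteq> B"
    and "B \<subseteq> A"
  shows "gain f step B s Z = gain f step A s Z"
  unfolding gain_def wealthA_def
  using walletA_eq_if_holders_subset[OF assms(1,3)] walletA_eq_if_holders_subset[OF assms(2,3)]
  by simp

lemma gain_mono_if_holders_subset:
  assumes "wealth_fun f" and "finite_tokens (snd (run step s Z))"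
    and "A \<inter> holders (snd s) \<subseteq> B" and "B \<subseteq> A"
  shows "gain f step B s Z \<le> gain f step A s Z"
proof -
  have "wealthA f B s = wealthA f A s"
    unfolding wealthA_def using walletA_eq_if_holders_subset[OF assms(3,4)] by simp
  moreover have "wealthA f B (run step s Z) \<le> wealthA f A (run step s Z)"
    using assms(1,2,4) by (rule wealthA_mono)
  ultimately show ?thesis
    unfolding gain_def by simp
qed

lemma deducibility_mono:
  assumes "deducibility \<kappa>" and "A \<subseteq> A'"
  shows "\<kappa> A X \<subseteq> \<kappa> A' X"
proof -
  have "\<forall>A A' X X'. A \<subseteq> A' \<longrightarrow> X \<subseteq> X' \<longrightarrow> \<kappa> A X \<subseteq> \<kappa> A' X'"
    using assms(1) unfolding deducibility_def by (elim conjE) assumption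
  with assms(2) show ?thesis by blast
qed

lemma deducibility_finite_cause:
  assumes "deducibility \<kappa>" and "finite X" and "X \<subseteq> \<kappa> A {}"
  shows "\<exists>A'\<subseteq>A. finite A' \<and> X \<subseteq> \<kappa> A' {}"
proof -
  have finite_causes: "\<forall>X0. finite X0 \<longrightarrow> (\<exists>A0. finite A0 \<and> X0 \<subseteq> \<kappa> A0 {})"
    using assms(1) unfolding deducibility_def by (elim conjE) assumption
  have no_shared_secrets: "\<forall>A B X. \<kappa> A X \<inter> \<kappa> B X \<subseteq> \<kappa> (A \<inter> B) X"
    using assms(1) unfolding deducibility_def by (elim conjE) assumption
  obtain A1 where "finite A1" and "X \<subseteq> \<kappa> A1 {}"
    using finite_causes assms(2) by blast
  with assms(3) no_shared_secrets have "X \<subseteq> \<kappa> (A1 \<inter> A) {}"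
    by blast
  with \<open>finite A1\<close> show ?thesis
    by (intro exI[of _ "A1 \<inter> A"]) auto
qed

lemma int_set_has_greatest:
  fixes S :: "int set"
  assumes "x \<in> S" and "\<And>y. y \<in> S \<Longrightarrow> y \<le> n"
  shows "\<exists>g\<in>S. \<forall>g'\<in>S. g' \<le> g"
proof -
  let ?T = "S \<inter> {x..n}"
  have fin: "finite ?T"
    by simp
  have x: "x \<in> ?T"
    using assms by simp
  have "g' \<le> Max ?T" if "g' \<in> S" for g'
  proof (cases "x \<le> g'")
    case True
    with that assms(2)[OF that] have "g' \<in> ?T" by simp
    with fin show ?thesis by (rule Max_ge)
  next
    case False
    with Max_ge[OF fin x] show ?thesis by linarith
  qed
  moreover have "Max ?T \<in> S"
    using Max_in[OF fin] x by blast
  ultimately show ?thesis by blast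
qed

locale bounded_future =
  fixes f :: "('t \<Rightarrow> nat) \<Rightarrow> nat"
    and step :: "('c,'a,'t) bstate \<Rightarrow> 'x \<Rightarrow> ('c,'a,'t) bstate option"
    and s :: "('c,'a,'t) bstate" and n :: nat
  assumes wealth_fun: "wealth_fun f"
    and finite_tokens_future: "\<And>Z. finite_tokens (snd (run step s Z))"
    and wealth_future_less: "\<And>Z. wealthA f UNIV (run step s Z) < n"
begin

lemma finite_tokens_state: "finite_tokens (snd s)"
  using finite_tokens_future[of "[]"] by simp

lemma gain_le_bound: "gain f step B s Z \<le> int n"
proof -
  have "wealthA f B (run step s Z) \<le> wealthA f UNIV (run step s Z)"
    using wealth_fun finite_tokens_future subset_UNIV by (rule wealthA_mono)
  then show ?thesis
    unfolding gain_def using wealth_future_less[of Z] by linarith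
qed

lemma gains_has_greatest: "\<exists>g\<in>gains f step \<kappa> B s. \<forall>g'\<in>gains f step \<kappa> B s. g' \<le> g"
  by (rule int_set_has_greatest[of "gain f step B s []" _ "int n"])
    (auto simp: gains_def gain_le_bound)

lemma uG_in_gains: "uG f step \<kappa> B s \<in> gains f step \<kappa> B s"
  and gain_le_uG: "Z \<in> lists (\<kappa> B {}) \<Longrightarrow> gain f step B s Z \<le> uG f step \<kappa> B s"
proof -
  obtain g where g: "g \<in> gains f step \<kappa> B s" "\<forall>g'\<in>gains f step \<kappa> B s. g' \<le> g"
    using gains_has_greatest by blast
  then have "uG f step \<kappa> B s = g"
    unfolding uG_def by (intro Greatest_equality) auto
  with g show "uG f step \<kappa> B s \<in> gains f step \<kappa> B s"
    and "Z \<in> lists (\<kappa> B {}) \<Longrightarrow> gain f step B s Z \<le> uG f step \<kappa> B s"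
    by (auto simp: gains_def)
qed

lemma xG_pos_imp_not_deducible:
  assumes "xG f step \<kappa> A s Y > 0"
  shows "Y \<notin> lists (\<kappa> A {})"
  using assms gain_le_uG[of Y \<kappa> A] unfolding xG_def by linarith

lemma uG_mono_if_holders_subset:
  assumes "deducibility \<kappa>" and "A \<inter> holders (snd s) \<subseteq> B" and "B \<subseteq> A"
  shows "uG f step \<kappa> B s \<le> uG f step \<kappa> A s"
proof -
  obtain Z where Z: "Z \<in> lists (\<kappa> B {})" and uG_B: "uG f step \<kappa> B s = gain f step B s Z"
    using uG_in_gains[of \<kappa> B] unfolding gains_def by blast
  have "Z \<in> lists (\<kappa> A {})"
    using Z deducibility_mono[OF assms(1,3)] by auto
  then have "gain f step A s Z \<le> uG f step \<kappa> A s"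
    by (rule gain_le_uG)
  moreover have "gain f step B s Z \<le> gain f step A s Z"
    using wealth_fun finite_tokens_future assms(2,3) by (rule gain_mono_if_holders_subset)
  ultimately show ?thesis
    using uG_B by linarith
qed

lemma xG_finitely_determined:
  assumes "deducibility \<kappa>"
  shows "\<exists>A0. A0 \<subseteq> A \<and> finite A0 \<and>
    (\<forall>B. A0 \<subseteq> B \<and> B \<subseteq> A \<longrightarrow> xG f step \<kappa> A0 s Y = xG f step \<kappa> B s Y)"
proof -
  obtain Z where Z: "Z \<in> lists (\<kappa> A {})" and uG_A: "uG f step \<kappa> A s = gain f step A s Z"
    using uG_in_gains[of \<kappa> A] unfolding gains_def by blast
  obtain A1 where "A1 \<subseteq> A" "finite A1" and Z_A1: "set Z \<subseteq> \<kappa> A1 {}"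
    using deducibility_finite_cause[OF assms, of "set Z" A] Z by auto
  define H where "H = holders (snd s) \<union> holders (snd (run step s Z)) \<union> holders (snd (run step s Y))"
  define A0 where "A0 = A1 \<union> A \<inter> H"
  have "finite H"
    unfolding H_def by (simp add: finite_holders finite_tokens_state finite_tokens_future)
  with \<open>finite A1\<close> have "finite A0"
    unfolding A0_def by simp
  have "A0 \<subseteq> A"
    unfolding A0_def using \<open>A1 \<subseteq> A\<close> by blast
  have xG_eq: "xG f step \<kappa> B s Y = xG f step \<kappa> A s Y" if "A0 \<subseteq> B" and "B \<subseteq> A" for B
  proof -
    have "A \<inter> H \<subseteq> B"
      using that(1) unfolding A0_def by blast
    then have s_B: "A \<inter> holders (snd s) \<subseteq> B"
      and Z_B: "A \<inter> holders (snd (run step s Z)) \<subseteq> B"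
      and Y_B: "A \<inter> holders (snd (run step s Y)) \<subseteq> B"
      unfolding H_def by blast+
    have "A1 \<subseteq> B"
      using that(1) unfolding A0_def by blast
    with Z_A1 deducibility_mono[OF assms] have "set Z \<subseteq> \<kappa> B {}"
      by blast
    then have "Z \<in> lists (\<kappa> B {})"
      by (simp add: lists_eq_set)
    then have "gain f step B s Z \<le> uG f step \<kappa> B s"
      by (rule gain_le_uG)
    moreover have "gain f step B s Z = gain f step A s Z"
      using s_B Z_B that(2) by (rule gain_eq_if_holders_subset)
    moreover have "uG f step \<kappa> B s \<le> uG f step \<kappa> A s"
      using assms s_B that(2) by (rule uG_mono_if_holders_subset)
    moreover have "gain f step B s Y = gain f step A s Y"
      using s_B Y_B that(2) by (rule gain_eq_if_holders_subset)
    ultimately show ?thesis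
      using uG_A unfolding xG_def by linarith
  qed
  moreover have "xG f step \<kappa> A0 s Y = xG f step \<kappa> A s Y"
    using xG_eq \<open>A0 \<subseteq> A\<close> by blast
  ultimately show ?thesis
    using \<open>A0 \<subseteq> A\<close> \<open>finite A0\<close> by (metis (no_types, lifting))
qed

end

lemma bounded_future_of_reachable:
  assumes "contract step S0" and "wealth_fun f" and "bounded_contract f step S0"
    and "reachable step S0 s"
  shows "\<exists>n. bounded_future f step s n"
proof -
  obtain s0 X where "s0 \<in> S0" and s: "run step s0 X = s"
    using assms(4) unfolding reachable_def reachable_from_def by blast
  obtain n where n: "\<And>t. reachable_from step s0 t \<Longrightarrow> wealthA f UNIV t < n"
    using assms(3) \<open>s0 \<in> S0\<close> unfolding bounded_contract_def by blast
  have "finite_tokens (snd s0)"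
    using assms(1) \<open>s0 \<in> S0\<close> unfolding contract_def by blast
  then have "finite_tokens (snd (run step s Z))" for Z
    unfolding s[symmetric] run_append[symmetric] using assms(1) by (rule finite_tokens_run[rotated])
  moreover have "wealthA f UNIV (run step s Z) < n" for Z
    using n[of "run step s Z"] unfolding reachable_from_def s[symmetric] run_append[symmetric]
    by blast
  ultimately have "bounded_future f step s n"
    using assms(2) by unfold_locales
  then show ?thesis ..
qed

theorem mainTheorem8:
  fixes f :: "('t \<Rightarrow> nat) \<Rightarrow> nat"
    and step :: "('c,'a,'t) bstate \<Rightarrow> 'x \<Rightarrow> ('c,'a,'t) bstate option"
    and S0 :: "('c,'a,'t) bstate set"
    and \<kappa> :: "'a set \<Rightarrow> 'x set \<Rightarrow> 'x set"
    and A :: "'a set" and s :: "('c,'a,'t) bstate" and Y :: "'x list"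
  assumes "countable (UNIV :: 'a set)" and "infinite (UNIV :: 'a set)"
    and "contract step S0"
    and "wealth_fun f"
    and "bounded_contract f step S0"
    and "deducibility \<kappa>"
    and "reachable step S0 s"
  shows "(\<exists>g\<in>gains f step \<kappa> A s. \<forall>g'\<in>gains f step \<kappa> A s. g' \<le> g)
    \<and> (xG f step \<kappa> A s Y > 0 \<longrightarrow> Y \<notin> lists (\<kappa> A {}))
    \<and> (\<exists>A0. A0 \<subseteq> A \<and> finite A0 \<and>
          (\<forall>B. A0 \<subseteq> B \<and> B \<subseteq> A \<longrightarrow> xG f step \<kappa> A0 s Y = xG f step \<kappa> B s Y))"
proof -
  obtain n where "bounded_future f step s n"
    using bounded_future_of_reachable assms(3,4,5,7) by blast
  then interpret bounded_future f step s n .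
  show ?thesis
    using gains_has_greatest[of \<kappa> A] xG_pos_imp_not_deducible[of \<kappa> A Y]
      xG_finitely_determined[OF assms(6), of A Y]
    by blast
qed

end
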